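(* Consider the half-duplex (HD) two-stage relay selection (TRS) scheme described in the context with $K\ge1$ relays, with $\varpi=0$, thresholds $\gamma_{th_j}=2^{2R_{D_j}}-1$ for $j=1,2$, and power coefficients satisfying $0<a_1<a_2$, $a_1+a_2=1$, $a_2>a_1\gamma_{th_2}$. Then its diversity order equals the number of relays: $$-\lim_{\rho\to\infty}\frac{\log P_{TRS}^{HD}(\rho)}{\log\rho}=K .$$
   Context: Network model. A base station (BS) is at the origin of the plane. There are $K\ge 1$ relays $R_1,\dots,R_K$ whose positions are i.i.d. uniformly distributed in the disc of radius $R_{\mathcal D}>0$ centred at the origin; $d_{SR_i}$ is the distance from the BS to $R_i$. Two users $D_1,D_2$ are at fixed points of the plane at distances $d_1,d_2>0$ from the BS, and $d_{R_iD_j}$ is the Euclidean distance between $R_i$ and $D_j$. Let $\alpha>0$ be the path loss exponent. The random variables $g_{SR_i}$, $g_{R_iD_1}$, $g_{R_iD_2}$ ($i=1,\dots,K$) are exponentially distributed with mean $1$ (squared magnitudes of $\mathcal{CN}(0,1)$ Rayleigh coefficients), $Z_i$ is exponentially distributed with mean $\Omega_{LI}>0$, and all of these are mutually independent and independent of the relay positions. Put $X_i=g_{SR_i}/(1+d_{SR_i}^\alpha)$ and $Y_{ji}=g_{R_iD_j}/(1+d_{R_iD_j}^\alpha)$. Let $\rho>0$ be the transmit SNR, $a_1,a_2$ power allocation coefficients, and $\varpi\in\{0,1\}$ the duplex factor. Define $\gamma_{D_2\to R_i}=\frac{\rho X_i a_2}{\rho X_i a_1+\rho\varpi Z_i+1}$,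 $\gamma_{D_1\to R_i}=\frac{\rho X_i a_1}{\rho\varpi Z_i+1}$, $\gamma^{(i)}_{D_2\to D_1}=\frac{\rho Y_{1i}a_2}{\rho Y_{1i}a_1+1}$, $\gamma^{(i)}_{D_1}=\rho Y_{1i}a_1$, $\gamma^{(i)}_{D_2}=\frac{\rho Y_{2i}a_2}{\rho Y_{2i}a_1+1}$. Target rates $R_{D_1},R_{D_2}>0$ are given; in HD mode $\varpi=0$ and $\gamma_{th_j}=2^{2R_{D_j}}-1$. TRS scheme: let $S=\{i: \gamma_{D_2\to R_i}\ge\gamma_{th_2},\ \gamma^{(i)}_{D_2\to D_1}\ge\gamma_{th_2},\ \gamma^{(i)}_{D_2}\ge\gamma_{th_2}\}$. The outage event is that either $S=\emptyset$, or $S\neq\emptyset$ and $\max_{i\in S}\min\{\gamma_{D_1\to R_i},\gamma^{(i)}_{D_1}\}<\gamma_{th_1}$; $P_{TRS}(\rho)$ is its probability, and $P_{TRS}^{HD}$ denotes it in HD mode. *)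

theory Defs
  imports "HOL-Probability.Probability"
begin

text \<open>Randomness attached to one relay R_i:
  (position in the plane (as a complex number), g_SR, g_RD1, g_RD2, Z_LI).\<close>
type_synonym relay_sample = "complex \<times> real \<times> real \<times> real \<times> real"

definition exp_mean :: "real \<Rightarrow> real measure" where
  "exp_mean m = density lborel (exponential_density (1 / m))"

text \<open>Joint law of the randomness of one relay: uniform position in the disc of
  radius RD centred at the BS (origin), independent of the fading gains and Z.\<close>
definition relay_measure :: "real \<Rightarrow> real \<Rightarrow> relay_sample measure" where
  "relay_measure RD Omega =
     uniform_measure lborel (cball 0 RD) \<Otimes>\<^sub>M
     (exp_mean 1 \<Otimes>\<^sub>M (exp_mean 1 \<Otimes>\<^sub>M (exp_mean 1 \<Otimes>\<^sub>M exp_mean Omega)))"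

definition network_space :: "real \<Rightarrow> real \<Rightarrow> nat \<Rightarrow> (nat \<Rightarrow> relay_sample) measure" where
  "network_space RD Omega K = PiM {..<K} (\<lambda>_. relay_measure RD Omega)"

definition X_gain :: "real \<Rightarrow> relay_sample \<Rightarrow> real" where
  "X_gain alpha = (\<lambda>(p, gSR, g1, g2, z). gSR / (1 + cmod p powr alpha))"

definition Y1_gain :: "real \<Rightarrow> complex \<Rightarrow> relay_sample \<Rightarrow> real" where
  "Y1_gain alpha u1 = (\<lambda>(p, gSR, g1, g2, z). g1 / (1 + cmod (p - u1) powr alpha))"

definition Y2_gain :: "real \<Rightarrow> complex \<Rightarrow> relay_sample \<Rightarrow> real" where
  "Y2_gain alpha u2 = (\<lambda>(p, gSR, g1, g2, z). g2 / (1 + cmod (p - u2) powr alpha))"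

definition Z_li :: "relay_sample \<Rightarrow> real" where
  "Z_li = (\<lambda>(p, gSR, g1, g2, z). z)"

text \<open>SINRs; w is the duplex factor, rho the transmit SNR.\<close>
definition gamma_D2_R :: "real \<Rightarrow> real \<Rightarrow> real \<Rightarrow> real \<Rightarrow> real \<Rightarrow> relay_sample \<Rightarrow> real" where
  "gamma_D2_R alpha a1 a2 w rho s =
     rho * X_gain alpha s * a2 / (rho * X_gain alpha s * a1 + rho * w * Z_li s + 1)"

definition gamma_D1_R :: "real \<Rightarrow> real \<Rightarrow> real \<Rightarrow> real \<Rightarrow> relay_sample \<Rightarrow> real" where
  "gamma_D1_R alpha a1 w rho s = rho * X_gain alpha s * a1 / (rho * w * Z_li s + 1)"

definition gamma_D2_D1 :: "real \<Rightarrow> complex \<Rightarrow> real \<Rightarrow> real \<Rightarrow> real \<Rightarrow> relay_sample \<Rightarrow> real" where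
  "gamma_D2_D1 alpha u1 a1 a2 rho s =
     rho * Y1_gain alpha u1 s * a2 / (rho * Y1_gain alpha u1 s * a1 + 1)"

definition gamma_D1 :: "real \<Rightarrow> complex \<Rightarrow> real \<Rightarrow> real \<Rightarrow> relay_sample \<Rightarrow> real" where
  "gamma_D1 alpha u1 a1 rho s = rho * Y1_gain alpha u1 s * a1"

definition gamma_D2 :: "real \<Rightarrow> complex \<Rightarrow> real \<Rightarrow> real \<Rightarrow> real \<Rightarrow> relay_sample \<Rightarrow> real" where
  "gamma_D2 alpha u2 a1 a2 rho s =
     rho * Y2_gain alpha u2 s * a2 / (rho * Y2_gain alpha u2 s * a1 + 1)"

definition TRS_S :: "real \<Rightarrow> complex \<Rightarrow> complex \<Rightarrow> real \<Rightarrow> real \<Rightarrow> real \<Rightarrow> real \<Rightarrow> real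
    \<Rightarrow> nat \<Rightarrow> (nat \<Rightarrow> relay_sample) \<Rightarrow> nat set" where
  "TRS_S alpha u1 u2 a1 a2 w g2 rho K om =
     {i. i < K \<and> gamma_D2_R alpha a1 a2 w rho (om i) \<ge> g2
          \<and> gamma_D2_D1 alpha u1 a1 a2 rho (om i) \<ge> g2
          \<and> gamma_D2 alpha u2 a1 a2 rho (om i) \<ge> g2}"

definition TRS_outage :: "real \<Rightarrow> complex \<Rightarrow> complex \<Rightarrow> real \<Rightarrow> real \<Rightarrow> real \<Rightarrow> real \<Rightarrow> real \<Rightarrow> real
    \<Rightarrow> nat \<Rightarrow> (nat \<Rightarrow> relay_sample) \<Rightarrow> bool" where
  "TRS_outage alpha u1 u2 a1 a2 w g1 g2 rho K om =
     (let S = TRS_S alpha u1 u2 a1 a2 w g2 rho K om in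
      S = {} \<or> (S \<noteq> {} \<and>
        Max ((\<lambda>i. min (gamma_D1_R alpha a1 w rho (om i)) (gamma_D1 alpha u1 a1 rho (om i))) ` S) < g1))"

definition P_TRS :: "real \<Rightarrow> complex \<Rightarrow> complex \<Rightarrow> real \<Rightarrow> real \<Rightarrow> nat \<Rightarrow> real \<Rightarrow> real \<Rightarrow> real
    \<Rightarrow> real \<Rightarrow> real \<Rightarrow> real \<Rightarrow> real" where
  "P_TRS alpha u1 u2 RD Omega K a1 a2 w g1 g2 rho =
     measure (network_space RD Omega K)
       {om \<in> space (network_space RD Omega K). TRS_outage alpha u1 u2 a1 a2 w g1 g2 rho K om}"

definition gamma_th_HD :: "real \<Rightarrow> real" where
  "gamma_th_HD R = 2 powr (2 * R) - 1"

definition P_TRS_HD :: "real \<Rightarrow> complex \<Rightarrow> complex \<Rightarrow> real \<Rightarrow> real \<Rightarrow> nat \<Rightarrow> real \<Rightarrow> real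
    \<Rightarrow> real \<Rightarrow> real \<Rightarrow> real \<Rightarrow> real" where
  "P_TRS_HD alpha u1 u2 RD Omega K a1 a2 R1 R2 rho =
     P_TRS alpha u1 u2 RD Omega K a1 a2 0 (gamma_th_HD R1) (gamma_th_HD R2) rho"

end

theory Submission
  imports Defs "HOL-Real_Asymp.Real_Asymp"
begin

text \<open>The outage event says that no relay passes both stages. The relays are i.i.d., so
  P_TRS^HD(rho) = q(rho)^K, where q(rho) is the probability that a single relay fails.
  A relay whose source gain g_SR is at most gamma_th1/(2 rho a1) fails, and
  P(g_SR \<le> t) = 1 - exp(-t) \<ge> t/2 for t \<le> 1, so q(rho) \<ge> c/rho. Conversely, the path losses
  of a relay inside the disc are bounded, so the relay succeeds once its three fading gains
  exceed some T/rho; the union bound gives q(rho) \<le> 3T/rho. Hence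
  -ln q(rho) / ln rho \<rightarrow> 1, and the diversity order is K.\<close>

lemma prob_space_exp_mean: "0 < m \<Longrightarrow> prob_space (exp_mean m)"
  unfolding exp_mean_def by (rule prob_space_exponential_density) simp

lemma sets_exp_mean [measurable_cong]: "sets (exp_mean m) = sets borel"
  by (simp add: exp_mean_def)

lemma space_exp_mean [simp]: "space (exp_mean m) = UNIV"
  by (simp add: exp_mean_def)

lemma emeasure_exp_mean_atMost:
  "0 < m \<Longrightarrow> 0 \<le> t \<Longrightarrow> emeasure (exp_mean m) {..t} = ennreal (1 - exp (- t / m))"
  unfolding exp_mean_def by (simp add: emeasure_erlang_density erlang_CDF_0)

lemma prob_space_uniform_cball:
  fixes c :: "'a::euclidean_space"
  assumes "0 < r"
  shows "prob_space (uniform_measure lborel (cball c r))"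
proof (rule prob_space_uniform_measure)
  have "emeasure lborel (cball c r) = ennreal (measure lborel (cball c r))"
    using emeasure_lborel_cball_finite[of c r] by (intro emeasure_eq_ennreal_measure) auto
  moreover have "0 < measure lborel (cball c r)"
    using content_cball_pos assms by blast
  ultimately show "emeasure lborel (cball c r) \<noteq> 0" "emeasure lborel (cball c r) \<noteq> \<infinity>"
    by auto
qed

lemma emeasure_pair_UNIV_Times:
  assumes "prob_space M" "space M = UNIV" "prob_space N" "B \<in> sets N"
  shows "emeasure (M \<Otimes>\<^sub>M N) (UNIV \<times> B) = emeasure N B"
proof -
  interpret M: prob_space M by fact
  interpret N: prob_space N by fact
  show ?thesis
    using assms(2,4) N.emeasure_pair_measure_Times[of UNIV M B] M.emeasure_space_1 sets.top[of M] by simp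
qed

lemma emeasure_pair_Times_UNIV:
  assumes "prob_space N" "space N = UNIV" "A \<in> sets M"
  shows "emeasure (M \<Otimes>\<^sub>M N) (A \<times> UNIV) = emeasure M A"
proof -
  interpret N: prob_space N by fact
  show ?thesis
    using assms(2,3) N.emeasure_pair_measure_Times[of A M UNIV] N.emeasure_space_1 sets.top[of N] by simp
qed

lemma UNIV_Times_in_sets_pair: "space M = UNIV \<Longrightarrow> B \<in> sets N \<Longrightarrow> UNIV \<times> B \<in> sets (M \<Otimes>\<^sub>M N)"
  by (metis pair_measureI sets.top)

lemma Times_UNIV_in_sets_pair: "space N = UNIV \<Longrightarrow> A \<in> sets M \<Longrightarrow> A \<times> UNIV \<in> sets (M \<Otimes>\<^sub>M N)"
  by (metis pair_measureI sets.top)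

lemma one_minus_exp_neg_ge:
  fixes t :: real
  assumes "0 \<le> t"
  shows "t / (1 + t) \<le> 1 - exp (- t)"
proof -
  have "exp (- t) \<le> 1 / (1 + t)"
    using exp_ge_add_one_self[of t] assms by (simp add: exp_minus field_simps)
  then show ?thesis
    using assms by (simp add: field_simps)
qed

lemma tendsto_neg_ln_power_div_ln:
  fixes q :: "real \<Rightarrow> real"
  assumes "0 < c" "0 < C"
    and bounds: "\<forall>\<^sub>F rho in at_top. c / rho \<le> q rho \<and> q rho \<le> C / rho"
  shows "((\<lambda>rho. - (ln (q rho ^ K) / ln rho)) \<longlongrightarrow> real K) at_top"
proof -
  have lim: "((\<lambda>rho. (ln rho - ln b) / ln rho) \<longlongrightarrow> 1) at_top" for b :: real
    by real_asymp
  have "\<forall>\<^sub>F rho in at_top. 0 < q rho \<and> (ln rho - ln C) / ln rho \<le> - ln (q rho) / ln rho \<and>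
      - ln (q rho) / ln rho \<le> (ln rho - ln c) / ln rho"
    using bounds eventually_gt_at_top[of 1]
  proof eventually_elim
    case (elim rho)
    then have "0 < q rho" "0 < ln rho"
      using assms(1) by (auto intro: less_le_trans[of 0 "c / rho"])
    have "ln (c / rho) \<le> ln (q rho)" "ln (q rho) \<le> ln (C / rho)"
      using elim assms \<open>0 < q rho\<close> by simp_all
    then have "ln rho - ln C \<le> - ln (q rho)" "- ln (q rho) \<le> ln rho - ln c"
      using elim assms by (simp_all add: ln_div)
    with \<open>0 < q rho\<close> \<open>0 < ln rho\<close> show ?case
      by (auto dest: divide_right_mono[of _ _ "ln rho"])
  qed
  then have pos: "\<forall>\<^sub>F rho in at_top. 0 < q rho"
    and lower: "\<forall>\<^sub>F rho in at_top. (ln rho - ln C) / ln rho \<le> - ln (q rho) / ln rho"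
    and upper: "\<forall>\<^sub>F rho in at_top. - ln (q rho) / ln rho \<le> (ln rho - ln c) / ln rho"
    by (simp_all add: eventually_conj_iff)
  have "((\<lambda>rho. - ln (q rho) / ln rho) \<longlongrightarrow> 1) at_top"
    using lower upper lim lim by (rule tendsto_sandwich)
  then have "((\<lambda>rho. real K * (- ln (q rho) / ln rho)) \<longlongrightarrow> real K) at_top"
    using tendsto_mult_left[of _ 1 _ "real K"] by (simp only: mult_1_right)
  moreover have "\<forall>\<^sub>F rho in at_top. real K * (- ln (q rho) / ln rho) = - (ln (q rho ^ K) / ln rho)"
    using pos by eventually_elim (simp add: ln_realpow)
  ultimately show ?thesis
    by (rule Lim_transform_eventually)
qed

lemma threshold_le_sinr:
  fixes snr a1 a2 g :: real
  assumes "0 < a1" "0 < g" "a1 * g < a2" "g / (a2 - a1 * g) \<le> snr"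
  shows "g \<le> snr * a2 / (snr * a1 + 1)"
proof -
  have "g \<le> snr * (a2 - a1 * g)"
    using assms(3,4) by (simp add: pos_divide_le_eq)
  moreover from this have "0 < snr"
    using assms(2,3) by (intro zero_less_mult_pos2[of snr "a2 - a1 * g"]) auto
  ultimately have "g * (snr * a1 + 1) \<le> snr * a2" "0 < snr * a1 + 1"
    using assms(1) by (simp_all add: algebra_simps add_pos_pos)
  then show ?thesis
    by (simp add: pos_le_divide_eq)
qed

lemma rho_path_gain_ge:
  fixes d D alpha rho th g :: real
  assumes "0 \<le> d" "d \<le> D" "0 \<le> alpha" "0 < rho" "0 \<le> th" "th * (1 + D powr alpha) / rho < g"
  shows "th \<le> rho * (g / (1 + d powr alpha))"
proof -
  have "th * (1 + d powr alpha) \<le> th * (1 + D powr alpha)"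
    using assms by (simp add: mult_left_mono powr_mono2)
  also have "\<dots> < rho * g"
    using assms(4,6) by (simp add: field_simps)
  finally show ?thesis
    by (simp add: field_simps add_pos_nonneg)
qed

lemma sets_relay_measure [measurable_cong]:
  "sets (relay_measure RD Omega) = sets (borel \<Otimes>\<^sub>M borel \<Otimes>\<^sub>M borel \<Otimes>\<^sub>M borel \<Otimes>\<^sub>M borel)"
  unfolding relay_measure_def by (intro sets_pair_measure_cong) (auto simp: exp_mean_def)

lemma space_relay_measure: "space (relay_measure RD Omega) = UNIV"
  unfolding relay_measure_def by (simp add: space_pair_measure)

lemma prob_space_relay_measure: "0 < RD \<Longrightarrow> 0 < Omega \<Longrightarrow> prob_space (relay_measure RD Omega)"
  unfolding relay_measure_def
  by (intro prob_space_pair prob_space_uniform_cball prob_space_exp_mean) auto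

lemma measure_relay_measure_cylinders:
  assumes "0 < RD" "0 < Omega" "0 \<le> t"
  shows "measure (relay_measure RD Omega) (UNIV \<times> {..t} \<times> UNIV) = 1 - exp (- t)"
    and "measure (relay_measure RD Omega) (UNIV \<times> UNIV \<times> {..t} \<times> UNIV) = 1 - exp (- t)"
    and "measure (relay_measure RD Omega) (UNIV \<times> UNIV \<times> UNIV \<times> {..t} \<times> UNIV) = 1 - exp (- t)"
    and "measure (relay_measure RD Omega) ((- cball 0 RD) \<times> UNIV) = 0"
  using assms prob_space_uniform_cball[OF assms(1), of "0::complex"]
    prob_space_exp_mean[of 1] prob_space_exp_mean[OF assms(2)]
  unfolding measure_def relay_measure_def
  by (simp_all add: emeasure_pair_UNIV_Times emeasure_pair_Times_UNIV UNIV_Times_in_sets_pair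
      Times_UNIV_in_sets_pair prob_space_pair space_pair_measure emeasure_exp_mean_atMost)

lemma sets_relay_measure_cylinders:
  "UNIV \<times> {..t} \<times> UNIV \<in> sets (relay_measure RD Omega)"
  "UNIV \<times> UNIV \<times> {..t} \<times> UNIV \<in> sets (relay_measure RD Omega)"
  "UNIV \<times> UNIV \<times> UNIV \<times> {..t} \<times> UNIV \<in> sets (relay_measure RD Omega)"
  "(- cball 0 RD) \<times> UNIV \<in> sets (relay_measure RD Omega)"
  by (simp_all add: sets_relay_measure UNIV_Times_in_sets_pair Times_UNIV_in_sets_pair
      space_pair_measure)

definition relay_serves_both ::
    "real \<Rightarrow> complex \<Rightarrow> complex \<Rightarrow> real \<Rightarrow> real \<Rightarrow> real \<Rightarrow> real \<Rightarrow> real \<Rightarrow> real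
      \<Rightarrow> relay_sample \<Rightarrow> bool" where
  "relay_serves_both alpha u1 u2 a1 a2 w g1 g2 rho s \<longleftrightarrow>
     gamma_D2_R alpha a1 a2 w rho s \<ge> g2 \<and> gamma_D2_D1 alpha u1 a1 a2 rho s \<ge> g2 \<and>
     gamma_D2 alpha u2 a1 a2 rho s \<ge> g2 \<and>
     min (gamma_D1_R alpha a1 w rho s) (gamma_D1 alpha u1 a1 rho s) \<ge> g1"

definition relay_outage_prob ::
    "real \<Rightarrow> complex \<Rightarrow> complex \<Rightarrow> real \<Rightarrow> real \<Rightarrow> real \<Rightarrow> real \<Rightarrow> real \<Rightarrow> real \<Rightarrow> real
      \<Rightarrow> real \<Rightarrow> real" where
  "relay_outage_prob alpha u1 u2 RD Omega a1 a2 w g1 g2 rho =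
     measure (relay_measure RD Omega) {s. \<not> relay_serves_both alpha u1 u2 a1 a2 w g1 g2 rho s}"

lemma relay_outage_event_in_sets:
  "{s. \<not> relay_serves_both alpha u1 u2 a1 a2 w g1 g2 rho s} \<in> sets (relay_measure RD Omega)"
proof -
  have "{s \<in> space (relay_measure RD Omega). \<not> relay_serves_both alpha u1 u2 a1 a2 w g1 g2 rho s}
      \<in> sets (relay_measure RD Omega)"
    unfolding relay_serves_both_def gamma_D2_R_def gamma_D2_D1_def gamma_D2_def gamma_D1_R_def
      gamma_D1_def X_gain_def Y1_gain_def Y2_gain_def Z_li_def case_prod_beta
    by measurable
  then show ?thesis
    by (simp add: space_relay_measure)
qed

lemma TRS_outage_iff:
  "TRS_outage alpha u1 u2 a1 a2 w g1 g2 rho K om \<longleftrightarrow>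
     (\<forall>i<K. \<not> relay_serves_both alpha u1 u2 a1 a2 w g1 g2 rho (om i))"
proof -
  define S where "S = TRS_S alpha u1 u2 a1 a2 w g2 rho K om"
  have "finite S"
    unfolding S_def TRS_S_def by auto
  then have "TRS_outage alpha u1 u2 a1 a2 w g1 g2 rho K om \<longleftrightarrow>
      (\<forall>i\<in>S. min (gamma_D1_R alpha a1 w rho (om i)) (gamma_D1 alpha u1 a1 rho (om i)) < g1)"
    unfolding TRS_outage_def Let_def S_def[symmetric] by (cases "S = {}") (auto simp: Max_less_iff)
  also have "\<dots> \<longleftrightarrow> (\<forall>i<K. \<not> relay_serves_both alpha u1 u2 a1 a2 w g1 g2 rho (om i))"
    unfolding S_def TRS_S_def relay_serves_both_def by auto
  finally show ?thesis .
qed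

lemma P_TRS_eq_relay_outage_prob_power:
  assumes "0 < RD" "0 < Omega"
  shows "P_TRS alpha u1 u2 RD Omega K a1 a2 w g1 g2 rho =
    relay_outage_prob alpha u1 u2 RD Omega a1 a2 w g1 g2 rho ^ K"
proof -
  let ?M = "relay_measure RD Omega"
  let ?B = "{s. \<not> relay_serves_both alpha u1 u2 a1 a2 w g1 g2 rho s}"
  interpret M: prob_space ?M
    using assms by (rule prob_space_relay_measure)
  interpret product_sigma_finite "\<lambda>_. ?M"
    by (simp add: product_sigma_finite_def M.sigma_finite_measure_axioms)
  have "{om \<in> space (network_space RD Omega K). TRS_outage alpha u1 u2 a1 a2 w g1 g2 rho K om}
      = (\<Pi>\<^sub>E i\<in>{..<K}. ?B)"
    unfolding network_space_def space_PiM space_relay_measure TRS_outage_iff by auto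
  moreover have "emeasure (network_space RD Omega K) (\<Pi>\<^sub>E i\<in>{..<K}. ?B) = (\<Prod>i<K. emeasure ?M ?B)"
    unfolding network_space_def by (rule emeasure_PiM) (auto simp: relay_outage_event_in_sets)
  moreover have "(\<Prod>i<K. emeasure ?M ?B) = ennreal (measure ?M ?B ^ K)"
    by (simp add: M.emeasure_eq_measure ennreal_power)
  ultimately show ?thesis
    unfolding P_TRS_def relay_outage_prob_def measure_def by simp
qed

lemma relay_serves_both_if_gains_large:
  fixes p u1 u2 :: complex
  assumes "0 < rho" "0 \<le> alpha" "0 < a1" "0 < g1" "0 < g2" "a1 * g2 < a2"
    and "g2 / (a2 - a1 * g2) \<le> th" "g1 / a1 \<le> th"
    and "cmod p \<le> RD"
    and "th * (1 + (RD + cmod u1 + cmod u2) powr alpha) / rho < x"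
    and "th * (1 + (RD + cmod u1 + cmod u2) powr alpha) / rho < y1"
    and "th * (1 + (RD + cmod u1 + cmod u2) powr alpha) / rho < y2"
  shows "relay_serves_both alpha u1 u2 a1 a2 0 g1 g2 rho (p, x, y1, y2, z)"
proof -
  let ?s = "(p, x, y1, y2, z)"
  have "0 \<le> th"
    using assms(3,4,8) by (meson divide_pos_pos less_le_trans less_imp_le)
  moreover have "cmod p \<le> RD + cmod u1 + cmod u2" "cmod (p - u1) \<le> RD + cmod u1 + cmod u2"
      "cmod (p - u2) \<le> RD + cmod u1 + cmod u2"
    using assms(9) norm_triangle_ineq4[of p u1] norm_triangle_ineq4[of p u2]
      norm_ge_zero[of u1] norm_ge_zero[of u2] by linarith+
  ultimately have gains: "th \<le> rho * X_gain alpha ?s" "th \<le> rho * Y1_gain alpha u1 ?s"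
      "th \<le> rho * Y2_gain alpha u2 ?s"
    using assms by (auto simp: X_gain_def Y1_gain_def Y2_gain_def simp del: times_divide_eq_right
        intro!: rho_path_gain_ge)
  have sinr: "g2 \<le> v * a2 / (v * a1 + 1) \<and> g1 \<le> v * a1" if "th \<le> v" for v
  proof
    have "g2 / (a2 - a1 * g2) \<le> v" "g1 / a1 \<le> v"
      using that assms(7,8) by linarith+
    then show "g2 \<le> v * a2 / (v * a1 + 1)" "g1 \<le> v * a1"
      using threshold_le_sinr[OF assms(3,5,6)] assms(3) by (simp_all add: pos_divide_le_eq)
  qed
  show ?thesis
    using sinr[OF gains(1)] sinr[OF gains(2)] sinr[OF gains(3)]
    by (simp add: relay_serves_both_def gamma_D2_R_def gamma_D2_D1_def gamma_D2_def
        gamma_D1_R_def gamma_D1_def)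
qed

lemma not_relay_serves_both_if_source_gain_small:
  assumes "0 < rho" "0 < a1" "0 < g1" "x \<le> g1 / (2 * rho * a1)"
  shows "\<not> relay_serves_both alpha u1 u2 a1 a2 0 g1 g2 rho (p, x, y1, y2, z)"
proof -
  define t where "t = g1 / (2 * rho * a1)"
  have "t * 1 \<le> t * (1 + cmod p powr alpha)"
    using assms(1-3) by (intro mult_left_mono) (auto simp: t_def)
  then have "x \<le> t * (1 + cmod p powr alpha)"
    using assms(4) by (simp add: t_def)
  then have "X_gain alpha (p, x, y1, y2, z) \<le> g1 / (2 * rho * a1)"
    by (simp add: X_gain_def pos_divide_le_eq add_pos_nonneg flip: t_def)
  then have "gamma_D1_R alpha a1 0 rho (p, x, y1, y2, z) \<le> g1 / 2"
    using assms(1,2) by (simp add: gamma_D1_R_def pos_le_divide_eq field_simps)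
  then show ?thesis
    using assms(3) by (auto simp: relay_serves_both_def)
qed

lemma relay_outage_prob_HD_lower:
  assumes "0 < RD" "0 < Omega" "0 < a1" "0 < g1"
  shows "\<forall>\<^sub>F rho in at_top.
    g1 / (4 * a1) / rho \<le> relay_outage_prob alpha u1 u2 RD Omega a1 a2 0 g1 g2 rho"
  using eventually_gt_at_top[of 0] eventually_ge_at_top[of "g1 / (2 * a1)"]
proof eventually_elim
  case (elim rho)
  interpret M: prob_space "relay_measure RD Omega"
    using assms(1,2) by (rule prob_space_relay_measure)
  define t where "t = g1 / (2 * rho * a1)"
  have "0 \<le> t" "t \<le> 1"
    using elim assms by (simp_all add: t_def field_simps)
  have "g1 / (4 * a1) / rho = t / 2"
    by (simp add: t_def)
  also have "\<dots> \<le> t / (1 + t)"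
    using \<open>0 \<le> t\<close> \<open>t \<le> 1\<close> by (intro frac_le) auto
  also have "\<dots> \<le> 1 - exp (- t)"
    using \<open>0 \<le> t\<close> by (rule one_minus_exp_neg_ge)
  also have "\<dots> = measure (relay_measure RD Omega) (UNIV \<times> {..t} \<times> UNIV)"
    using assms(1,2) \<open>0 \<le> t\<close> by (simp add: measure_relay_measure_cylinders)
  also have "\<dots> \<le> relay_outage_prob alpha u1 u2 RD Omega a1 a2 0 g1 g2 rho"
    unfolding relay_outage_prob_def
    using elim assms not_relay_serves_both_if_source_gain_small[of rho a1 g1]
    by (intro M.finite_measure_mono relay_outage_event_in_sets) (auto simp: t_def)
  finally show ?case .
qed

lemma relay_outage_prob_HD_upper:
  assumes "0 \<le> alpha" "0 < RD" "0 < Omega" "0 < a1" "0 < g1" "0 < g2" "a1 * g2 < a2"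
  shows "\<exists>C>0. \<forall>rho>0. relay_outage_prob alpha u1 u2 RD Omega a1 a2 0 g1 g2 rho \<le> C / rho"
proof -
  let ?M = "relay_measure RD Omega"
  interpret M: prob_space ?M
    using assms(2,3) by (rule prob_space_relay_measure)
  define th where "th = max (g2 / (a2 - a1 * g2)) (g1 / a1)"
  define T where "T = th * (1 + (RD + cmod u1 + cmod u2) powr alpha)"
  have "0 < th"
    using assms(4,5) by (simp add: th_def less_max_iff_disj)
  then have "0 < T"
    by (simp add: T_def add_pos_nonneg)
  have "relay_outage_prob alpha u1 u2 RD Omega a1 a2 0 g1 g2 rho \<le> 3 * T / rho" if "0 < rho" for rho
  proof -
    define t where "t = T / rho"
    let ?A0 = "(- cball 0 RD) \<times> (UNIV :: (real \<times> real \<times> real \<times> real) set)"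
    let ?A1 = "(UNIV :: complex set) \<times> {..t} \<times> (UNIV :: (real \<times> real \<times> real) set)"
    let ?A2 = "(UNIV :: complex set) \<times> (UNIV :: real set) \<times> {..t} \<times> (UNIV :: (real \<times> real) set)"
    let ?A3 = "(UNIV :: complex set) \<times> (UNIV :: real set) \<times> (UNIV :: real set) \<times> {..t}
      \<times> (UNIV :: real set)"
    have "0 \<le> t"
      using \<open>0 < T\<close> that by (simp add: t_def)
    have sets: "?A0 \<in> sets ?M" "?A1 \<in> sets ?M" "?A2 \<in> sets ?M" "?A3 \<in> sets ?M"
      by (simp_all add: sets_relay_measure_cylinders)
    have "{s. \<not> relay_serves_both alpha u1 u2 a1 a2 0 g1 g2 rho s} \<subseteq> ?A0 \<union> ?A1 \<union> ?A2 \<union> ?A3"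
    proof
      fix s
      assume "s \<in> {s. \<not> relay_serves_both alpha u1 u2 a1 a2 0 g1 g2 rho s}"
      moreover obtain p x y1 y2 z where "s = (p, x, y1, y2, z)"
        by (rule prod_cases5)
      moreover have "relay_serves_both alpha u1 u2 a1 a2 0 g1 g2 rho (p, x, y1, y2, z)"
        if "cmod p \<le> RD" "t < x" "t < y1" "t < y2"
        using that unfolding t_def T_def
        by (intro relay_serves_both_if_gains_large[OF \<open>0 < rho\<close> assms(1,4-7), where th = th])
          (auto simp: th_def)
      ultimately show "s \<in> ?A0 \<union> ?A1 \<union> ?A2 \<union> ?A3"
        by (auto simp: not_le intro: leI)
    qed
    then have "relay_outage_prob alpha u1 u2 RD Omega a1 a2 0 g1 g2 rho
        \<le> measure ?M (?A0 \<union> ?A1 \<union> ?A2 \<union> ?A3)"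
      unfolding relay_outage_prob_def using sets by (intro M.finite_measure_mono) auto
    also have "\<dots> \<le> measure ?M ?A0 + measure ?M ?A1 + measure ?M ?A2 + measure ?M ?A3"
      using sets by (intro measure_Un_le[THEN order_trans] add_right_mono sets.Un) auto
    also have "\<dots> = 3 * (1 - exp (- t))"
      using assms(2,3) \<open>0 \<le> t\<close> by (simp add: measure_relay_measure_cylinders)
    also have "\<dots> \<le> 3 * t"
      using exp_ge_add_one_self[of "- t"] by simp
    finally show ?thesis
      by (simp add: t_def)
  qed
  with \<open>0 < T\<close> show ?thesis
    by (intro exI[of _ "3 * T"]) auto
qed

lemma gamma_th_HD_pos: "0 < R \<Longrightarrow> 0 < gamma_th_HD R"
  by (simp add: gamma_th_HD_def)

theorem mainTheorem4:
  fixes K :: nat and alpha RD Omega a1 a2 R1 R2 :: real and u1 u2 :: complex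
  assumes "K \<ge> 1" and "alpha > 0" and "RD > 0" and "Omega > 0"
    and "cmod u1 > 0" and "cmod u2 > 0"
    and "R1 > 0" and "R2 > 0"
    and "0 < a1" and "a1 < a2" and "a1 + a2 = 1" and "a2 > a1 * gamma_th_HD R2"
  shows "((\<lambda>rho. - (ln (P_TRS_HD alpha u1 u2 RD Omega K a1 a2 R1 R2 rho) / ln rho))
           \<longlongrightarrow> real K) at_top"
proof -
  let ?g1 = "gamma_th_HD R1" and ?g2 = "gamma_th_HD R2"
  let ?q = "relay_outage_prob alpha u1 u2 RD Omega a1 a2 0 ?g1 ?g2"
  have "0 < ?g1" "0 < ?g2"
    using assms(7,8) by (simp_all add: gamma_th_HD_pos)
  obtain C where "0 < C" and upper: "\<forall>rho>0. ?q rho \<le> C / rho"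
    using relay_outage_prob_HD_upper[of alpha RD Omega a1 ?g1 ?g2 a2 u1 u2]
      assms(2-4,9,12) \<open>0 < ?g1\<close> \<open>0 < ?g2\<close> by auto
  have "\<forall>\<^sub>F rho in at_top. ?g1 / (4 * a1) / rho \<le> ?q rho \<and> ?q rho \<le> C / rho"
    using relay_outage_prob_HD_lower[OF assms(3,4,9) \<open>0 < ?g1\<close>] eventually_gt_at_top[of 0]
    by eventually_elim (use upper in auto)
  then have "((\<lambda>rho. - (ln (?q rho ^ K) / ln rho)) \<longlongrightarrow> real K) at_top"
    using \<open>0 < C\<close> \<open>0 < ?g1\<close> assms(9)
    by (intro tendsto_neg_ln_power_div_ln[where c = "?g1 / (4 * a1)" and C = C]) auto
  then show ?thesis
    by (simp add: P_TRS_HD_def P_TRS_eq_relay_outage_prob_power assms(3,4))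
qed

end
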